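(* Let $d \geq 1$ be a fixed dimension and let $G_{\mathrm{base}}$ be an unweighted $d$-dimensional grid graph on $L$ vertices (vertex set $[n_1]\times\cdots\times[n_d]$, two vertices adjacent iff they differ by exactly $1$ in exactly one coordinate). Then for every function $f$, the pair $(G_{\mathrm{base}}, f)$ is tractable, i.e. the mask $\mathbf{M} = [f(\mathrm{dist}_{G_{\mathrm{base}}}(i,j))]_{i,j=1,\dots,L}$ supports matrix-vector multiplication in time sub-quadratic in $L$.
   Context: $\mathrm{dist}_{G_{\mathrm{base}}}(i,j)$ denotes the shortest-path distance between vertices $i$ and $j$ in $G_{\mathrm{base}}$. A pair $(G_{\mathrm{base}}, f)$ is called tractable if the matrix $[f(\mathrm{dist}_{G_{\mathrm{base}}}(i,j))]_{i,j}$ admits an algorithm computing $\mathbf{M}\mathbf{x}$ for any input $\mathbf{x}\in\mathbb{R}^L$ in $o(L^2)$ time. *)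

theory Defs
  imports Complex_Main "HOL-Library.Landau_Symbols"
begin

definition grid_vertices :: "nat list \<Rightarrow> nat list set" where
  "grid_vertices ns = {v. length v = length ns \<and> (\<forall>i<length ns. v ! i < ns ! i)}"

definition grid_adj :: "nat list \<Rightarrow> nat list \<Rightarrow> nat list \<Rightarrow> bool" where
  "grid_adj ns u v \<longleftrightarrow> u \<in> grid_vertices ns \<and> v \<in> grid_vertices ns \<and>
     (\<exists>k<length ns. (u ! k = v ! k + 1 \<or> v ! k = u ! k + 1) \<and>
                    (\<forall>i<length ns. i \<noteq> k \<longrightarrow> u ! i = v ! i))"

fun walk_of_len :: "('a \<Rightarrow> 'a \<Rightarrow> bool) \<Rightarrow> nat \<Rightarrow> 'a \<Rightarrow> 'a \<Rightarrow> bool" where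
  "walk_of_len E 0 u v = (u = v)"
| "walk_of_len E (Suc k) u v = (\<exists>w. E u w \<and> walk_of_len E k w v)"

definition graph_dist :: "('a \<Rightarrow> 'a \<Rightarrow> bool) \<Rightarrow> 'a \<Rightarrow> 'a \<Rightarrow> nat" where
  "graph_dist E u v = (LEAST k. walk_of_len E k u v)"

text \<open>Instructions; register operands refer to earlier registers; inputs are indexed by 'a.\<close>
datatype 'a instr = Const real | Input 'a | Add nat nat | Sub nat nat | Mul nat nat

fun instr_ok :: "nat \<Rightarrow> 'a instr \<Rightarrow> bool" where
  "instr_ok p (Add a b) = (a < p \<and> b < p)"
| "instr_ok p (Sub a b) = (a < p \<and> b < p)"
| "instr_ok p (Mul a b) = (a < p \<and> b < p)"
| "instr_ok p _ = True"

definition wf_prog :: "'a instr list \<Rightarrow> bool" where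
  "wf_prog P \<longleftrightarrow> (\<forall>p<length P. instr_ok p (P ! p))"

fun eval_instr :: "('a \<Rightarrow> real) \<Rightarrow> real list \<Rightarrow> 'a instr \<Rightarrow> real" where
  "eval_instr x r (Const c) = c"
| "eval_instr x r (Input i) = x i"
| "eval_instr x r (Add a b) = r ! a + r ! b"
| "eval_instr x r (Sub a b) = r ! a - r ! b"
| "eval_instr x r (Mul a b) = r ! a * r ! b"

definition run_prog :: "'a instr list \<Rightarrow> ('a \<Rightarrow> real) \<Rightarrow> real list" where
  "run_prog P x = fold (\<lambda>ins r. r @ [eval_instr x r ins]) P []"

definition computes_matvec ::
  "'a instr list \<Rightarrow> ('a \<Rightarrow> nat) \<Rightarrow> 'a set \<Rightarrow> ('a \<Rightarrow> 'a \<Rightarrow> real) \<Rightarrow> bool" where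
  "computes_matvec P out V M \<longleftrightarrow> wf_prog P \<and> (\<forall>u\<in>V. out u < length P) \<and>
     (\<forall>x. \<forall>u\<in>V. run_prog P x ! out u = (\<Sum>v\<in>V. M u v * x v))"

end

theory Submission
  imports Defs "HOL-Real_Asymp.Real_Asymp"
begin

text \<open>
  On the grid, the shortest-path distance is the Manhattan distance of the coordinate vectors.
  Encode a vertex u by the mixed-radix number with digits u_i and radices 2 n_i: since every
  coordinate difference lies strictly between -n_i and n_i, the difference of two codes
  determines all coordinate differences, hence the distance. The mask is therefore a principal
  submatrix of a Toeplitz matrix [t (a - b)] of size N \<le> 2^(d+1) L.

  A Toeplitz matrix of size 2m has the block form [[A, B], [C, A]], where A, B - A and C - A
  are again Toeplitz, and
    [[A, B], [C, A]] (x1, x2) = (A (x1 + x2) + (B - A) x2, A (x1 + x2) + (C - A) x1).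
  Three half-size products suffice, so a straight-line program of length O(3^k) computes a
  Toeplitz product of size 2^k. As 3^5 < 2^8, this is O(N^(8/5)), which is o(L^2).
\<close>

definition exec_from :: "('a \<Rightarrow> real) \<Rightarrow> 'a instr list \<Rightarrow> real list \<Rightarrow> real list" where
  "exec_from x Q r = fold (\<lambda>ins r. r @ [eval_instr x r ins]) Q r"

lemma run_prog_eq_exec_from: "run_prog P x = exec_from x P []"
  by (simp add: run_prog_def exec_from_def)

lemma exec_from_append: "exec_from x (Q1 @ Q2) r = exec_from x Q2 (exec_from x Q1 r)"
  by (simp add: exec_from_def)

lemma exec_from_Cons: "exec_from x (i # Q) r = exec_from x Q (r @ [eval_instr x r i])"
  by (simp add: exec_from_def)

lemma exec_from_snoc:
  "exec_from x (Q @ [i]) r = exec_from x Q r @ [eval_instr x (exec_from x Q r) i]"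
  by (simp add: exec_from_def)

lemma exec_from_extends: "\<exists>s. exec_from x Q r = r @ s \<and> length s = length Q"
  by (induction Q rule: rev_induct) (auto simp: exec_from_snoc exec_from_def)

lemma length_exec_from [simp]: "length (exec_from x Q r) = length r + length Q"
  using exec_from_extends[of x Q r] by auto

lemma nth_exec_from_prefix: "p < length r \<Longrightarrow> exec_from x Q r ! p = r ! p"
  using exec_from_extends[of x Q r] by (auto simp: nth_append)

lemma instr_ok_mono: "instr_ok n i \<Longrightarrow> n \<le> m \<Longrightarrow> instr_ok m i"
  by (cases i) auto

lemma eval_instr_append: "instr_ok (length r) i \<Longrightarrow> eval_instr x (r @ s) i = eval_instr x r i"
  by (cases i) (auto simp: nth_append)

lemma nth_exec_from_map:
  assumes "\<forall>j<m. instr_ok (length r) (h j)" "i < m"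
  shows "exec_from x (map h [0..<m] @ Q) r ! (length r + i) = eval_instr x r (h i)"
  using assms
proof (induction m arbitrary: Q)
  case 0
  then show ?case by simp
next
  case (Suc m)
  obtain s where s: "exec_from x (map h [0..<m]) r = r @ s" "length s = m"
    using exec_from_extends[of x "map h [0..<m]" r] by auto
  show ?case
  proof (cases "i < m")
    case True
    then show ?thesis using Suc.IH[of "h m # Q"] Suc.prems by simp
  next
    case False
    then have "i = m" using Suc.prems by simp
    then show ?thesis
      using s Suc.prems eval_instr_append[of r "h m" x s]
      by (simp add: exec_from_append exec_from_Cons nth_exec_from_prefix nth_append)
  qed
qed

lemma nth_exec_from_map_Add:
  fixes x :: "'a \<Rightarrow> real" and Post :: "'a instr list"
  assumes "\<forall>j<m. p j < length r + length Pre \<and> q j < length r + length Pre"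
    and "i < m" and "n = length r + length Pre + i"
  defines "Z \<equiv> exec_from x (Pre @ map (\<lambda>j. Add (p j) (q j)) [0..<m] @ Post) r"
  shows "Z ! n = Z ! p i + Z ! q i"
proof -
  let ?R = "exec_from x Pre r"
  have "Z ! (length ?R + i) = eval_instr x ?R (Add (p i) (q i))"
    unfolding Z_def exec_from_append[of x Pre] by (rule nth_exec_from_map) (use assms in auto)
  moreover have "p i < length ?R" "q i < length ?R"
    using assms by auto
  ultimately show ?thesis
    using assms(3) by (simp add: Z_def exec_from_append nth_exec_from_prefix)
qed

definition wf_prog_from :: "nat \<Rightarrow> 'a instr list \<Rightarrow> bool" where
  "wf_prog_from n Q \<longleftrightarrow> (\<forall>p<length Q. instr_ok (n + p) (Q ! p))"

lemma wf_prog_iff_wf_prog_from: "wf_prog P \<longleftrightarrow> wf_prog_from 0 P"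
  by (simp add: wf_prog_def wf_prog_from_def)

lemma wf_prog_from_append:
  "wf_prog_from n (Q1 @ Q2) \<longleftrightarrow> wf_prog_from n Q1 \<and> wf_prog_from (n + length Q1) Q2"
  unfolding wf_prog_from_def
  by (auto simp: nth_append add.assoc)
    (metis add_diff_cancel_left' nat_add_left_cancel_less not_add_less1,
     metis le_add_diff_inverse not_less nat_add_left_cancel_less)

lemma wf_prog_from_map: "\<forall>j<m. instr_ok n (h j) \<Longrightarrow> wf_prog_from n (map h [0..<m])"
  unfolding wf_prog_from_def by (auto intro: instr_ok_mono)

section \<open>Toeplitz products by divide and conquer\<close>

lemma sum_lessThan_add:
  "(\<Sum>i<m + n. f i) = (\<Sum>i<m. f i) + (\<Sum>i<n. f (m + i :: nat) :: 'b :: comm_monoid_add)"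
  by (induction n) (auto simp: add.assoc)

lemma toeplitz_sum_split_low:
  fixes t :: "int \<Rightarrow> real"
  shows "(\<Sum>j<2 * m. t (int a - int j) * y j)
    = (\<Sum>j<m. t (int a - int j) * (y j + y (m + j)))
      + (\<Sum>j<m. (t (int a - int j - int m) - t (int a - int j)) * y (m + j))"
  unfolding mult_2 sum_lessThan_add by (simp add: sum.distrib[symmetric] algebra_simps)

lemma toeplitz_sum_split_high:
  fixes t :: "int \<Rightarrow> real"
  shows "(\<Sum>j<2 * m. t (int (m + a) - int j) * y j)
    = (\<Sum>j<m. t (int a - int j) * (y j + y (m + j)))
      + (\<Sum>j<m. (t (int a - int j + int m) - t (int a - int j)) * y j)"
  unfolding mult_2 sum_lessThan_add by (simp add: sum.distrib[symmetric] algebra_simps)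

fun toeplitz_len :: "nat \<Rightarrow> nat" where
  "toeplitz_len 0 = 2"
| "toeplitz_len (Suc k) = 3 * toeplitz_len k + 3 * 2 ^ k"

text \<open>
  Placed at register b and reading the 2^k registers xs (with contents x_j), the program
  toeplitz_prog k t xs b leaves y_a = (\<Sum>j<2^k. t (a - j) * x_j) in its last 2^k registers.
\<close>
fun toeplitz_prog :: "nat \<Rightarrow> (int \<Rightarrow> real) \<Rightarrow> nat list \<Rightarrow> nat \<Rightarrow> 'a instr list" where
  "toeplitz_prog 0 t xs b = [Const (t 0), Mul b (xs ! 0)]"
| "toeplitz_prog (Suc k) t xs b =
    map (\<lambda>j. Add (xs ! j) (xs ! (2 ^ k + j))) [0..<2 ^ k]
    @ toeplitz_prog k t [b..<b + 2 ^ k] (b + 2 ^ k)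
    @ toeplitz_prog k (\<lambda>c. t (c - 2 ^ k) - t c) (drop (2 ^ k) xs) (b + 2 ^ k + toeplitz_len k)
    @ toeplitz_prog k (\<lambda>c. t (c + 2 ^ k) - t c) (take (2 ^ k) xs) (b + 2 ^ k + 2 * toeplitz_len k)
    @ map (\<lambda>j. Add (b + toeplitz_len k + j) (b + 2 * toeplitz_len k + j)) [0..<2 ^ k]
    @ map (\<lambda>j. Add (b + toeplitz_len k + j) (b + 3 * toeplitz_len k + j)) [0..<2 ^ k]"

lemma toeplitz_len_ge: "2 ^ k \<le> toeplitz_len k"
  by (induction k) auto

lemma toeplitz_len_le: "toeplitz_len k \<le> 5 * 3 ^ k"
proof -
  have "toeplitz_len k + 3 * 2 ^ k = 5 * 3 ^ k"
    by (induction k) auto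
  then show ?thesis by linarith
qed

lemma length_toeplitz_prog [simp]: "length (toeplitz_prog k t xs b) = toeplitz_len k"
  by (induction k arbitrary: t xs b) auto

lemma wf_toeplitz_prog:
  assumes "length xs = 2 ^ k" "set xs \<subseteq> {..<b}"
  shows "wf_prog_from b (toeplitz_prog k t xs b)"
  using assms
proof (induction k arbitrary: t xs b)
  case 0
  then have "xs ! 0 < b" by (auto simp: subset_iff)
  then show ?case by (auto simp: wf_prog_from_def nth_Cons')
next
  case (Suc k)
  let ?m = "2 ^ k :: nat" and ?n = "toeplitz_len k"
  have xs: "\<forall>j<?m. xs ! j < b \<and> xs ! (?m + j) < b"
    using Suc.prems by (auto simp: subset_iff)
  have "set (drop ?m xs) \<subseteq> {..<b + ?m + ?n}" "set (take ?m xs) \<subseteq> {..<b + ?m + 2 * ?n}"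
    using Suc.prems by (auto dest!: in_set_dropD in_set_takeD)
  then have "wf_prog_from (b + ?m) (toeplitz_prog k t [b..<b + ?m] (b + ?m) :: 'a instr list)"
    "wf_prog_from (b + ?m + ?n)
      (toeplitz_prog k (\<lambda>c. t (c - 2 ^ k) - t c) (drop ?m xs) (b + ?m + ?n) :: 'a instr list)"
    "wf_prog_from (b + ?m + 2 * ?n)
      (toeplitz_prog k (\<lambda>c. t (c + 2 ^ k) - t c) (take ?m xs) (b + ?m + 2 * ?n) :: 'a instr list)"
    using Suc.prems by (auto intro: Suc.IH)
  then show ?case
    using xs by (simp add: wf_prog_from_append wf_prog_from_map algebra_simps mult_2 mult_2_right)
qed

lemma nth_toeplitz_prog_Suc:
  fixes x :: "'a \<Rightarrow> real" and r :: "real list" and xs :: "nat list"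
    and t :: "int \<Rightarrow> real" and k :: nat
  defines "Z \<equiv> exec_from x (toeplitz_prog (Suc k) t xs (length r)) r"
    and "m \<equiv> 2 ^ k" and "n \<equiv> toeplitz_len k"
  assumes "a < 2 * m"
  shows "Z ! (length r + toeplitz_len (Suc k) - 2 ^ Suc k + a)
    = Z ! (length r + n + a mod m) + Z ! (length r + (if a < m then 2 else 3) * n + a mod m)"
proof -
  let ?b = "length r"
  let ?Pre = "map (\<lambda>j. Add (xs ! j) (xs ! (m + j))) [0..<m]
    @ toeplitz_prog k t [?b..<?b + m] (?b + m)
    @ toeplitz_prog k (\<lambda>c. t (c - 2 ^ k) - t c) (drop m xs) (?b + m + n)
    @ toeplitz_prog k (\<lambda>c. t (c + 2 ^ k) - t c) (take m xs) (?b + m + 2 * n) :: 'a instr list"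
  let ?F1 = "map (\<lambda>j. Add (?b + n + j) (?b + 2 * n + j)) [0..<m] :: 'a instr list"
  let ?F2 = "map (\<lambda>j. Add (?b + n + j) (?b + 3 * n + j)) [0..<m] :: 'a instr list"
  have Z: "Z = exec_from x (?Pre @ ?F1 @ ?F2) r"
    by (simp add: Z_def m_def n_def)
  have "m \<le> n"
    using toeplitz_len_ge[of k] by (simp add: m_def n_def)
  show ?thesis
  proof (cases "a < m")
    case True
    then show ?thesis
      using nth_exec_from_map_Add[of m "\<lambda>j. ?b + n + j" r ?Pre "\<lambda>j. ?b + 2 * n + j"
          a "?b + toeplitz_len (Suc k) - 2 ^ Suc k + a" x ?F2] \<open>m \<le> n\<close>
      by (simp add: Z m_def n_def)
  next
    case False
    then show ?thesis
      using nth_exec_from_map_Add[of m "\<lambda>j. ?b + n + j" r "?Pre @ ?F1" "\<lambda>j. ?b + 3 * n + j"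
          "a - m" "?b + toeplitz_len (Suc k) - 2 ^ Suc k + a" x "[]"] \<open>m \<le> n\<close> assms(4)
      by (simp add: Z m_def n_def le_mod_geq)
  qed
qed

lemma nth_toeplitz_prog:
  assumes "length xs = 2 ^ k" "set xs \<subseteq> {..<length r}" "a < 2 ^ k"
  shows "exec_from x (toeplitz_prog k t xs (length r)) r ! (length r + toeplitz_len k - 2 ^ k + a)
    = (\<Sum>j<2 ^ k. t (int a - int j) * r ! (xs ! j))"
  using assms
proof (induction k arbitrary: t xs r a)
  case 0
  then have "xs ! 0 < length r" "a = 0" by (auto simp: subset_iff)
  then show ?case by (simp add: exec_from_def nth_append)
next
  case (Suc k)
  let ?m = "2 ^ k :: nat" and ?n = "toeplitz_len k" and ?b = "length r"
  let ?S = "map (\<lambda>j. Add (xs ! j) (xs ! (?m + j))) [0..<?m] :: 'a instr list"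
  let ?Q1 = "toeplitz_prog k t [?b..<?b + ?m] (?b + ?m) :: 'a instr list"
  let ?Q2 = "toeplitz_prog k (\<lambda>c. t (c - 2 ^ k) - t c) (drop ?m xs) (?b + ?m + ?n) :: 'a instr list"
  let ?Q3 = "toeplitz_prog k (\<lambda>c. t (c + 2 ^ k) - t c) (take ?m xs) (?b + ?m + 2 * ?n)
    :: 'a instr list"
  define Z where "Z = exec_from x (toeplitz_prog (Suc k) t xs ?b) r"
  define y where "y j = r ! (xs ! j)" for j
  have halves: "set (drop ?m xs) \<subseteq> {..<?b + c}" "set (take ?m xs) \<subseteq> {..<?b + c}" for c
    using Suc.prems set_drop_subset[of ?m xs] set_take_subset[of ?m xs] by fastforce+
  have inputs: "exec_from x Pre r ! (xs ! j) = y j" if "j < 2 * ?m" for Pre j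
    using Suc.prems that by (auto simp: y_def subset_iff nth_exec_from_prefix)
  have sums: "exec_from x ?S r ! (?b + j) = y j + y (?m + j)" if "j < ?m" for j
    using nth_exec_from_map_Add[of ?m "\<lambda>j. xs ! j" r "[]" "\<lambda>j. xs ! (?m + j)" j "?b + j" x "[]"]
      Suc.prems that
    by (simp add: inputs subset_iff)
  have rec: "Z ! p = (\<Sum>j<?m. t' (int a' - int j) * exec_from x Pre r ! (ys ! j))"
    if "toeplitz_prog (Suc k) t xs ?b = Pre @ toeplitz_prog k t' ys (?b + length Pre) @ Post"
      "p = ?b + length Pre + ?n - ?m + a'"
      "length ys = ?m" "set ys \<subseteq> {..<?b + length Pre}" "a' < ?m" for Pre Post t' ys a' p
    using Suc.IH[of ys "exec_from x Pre r" a' t'] that toeplitz_len_ge[of k]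
    by (simp add: Z_def exec_from_append nth_exec_from_prefix)
  have Q1: "Z ! (?b + ?n + a') = (\<Sum>j<?m. t (int a' - int j) * (y j + y (?m + j)))"
    if "a' < ?m" for a'
    using rec[where Pre = ?S and t' = t and ys = "[?b..<?b + ?m]" and p = "?b + ?n + a'"] that
    by (simp add: sums subset_iff)
  have Q2: "Z ! (?b + 2 * ?n + a')
      = (\<Sum>j<?m. (t (int a' - int j - 2 ^ k) - t (int a' - int j)) * y (?m + j))"
    if "a' < ?m" for a'
    using rec[where Pre = "?S @ ?Q1" and t' = "\<lambda>c. t (c - 2 ^ k) - t c" and ys = "drop ?m xs"
        and p = "?b + 2 * ?n + a'" and a' = a'] that Suc.prems(1)
    by (simp add: inputs halves add.assoc)
  have Q3: "Z ! (?b + 3 * ?n + a')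
      = (\<Sum>j<?m. (t (int a' - int j + 2 ^ k) - t (int a' - int j)) * y j)"
    if "a' < ?m" for a'
    using rec[where Pre = "?S @ ?Q1 @ ?Q2" and t' = "\<lambda>c. t (c + 2 ^ k) - t c" and ys = "take ?m xs"
        and p = "?b + 3 * ?n + a'" and a' = a'] that Suc.prems(1)
    by (simp add: inputs halves add.assoc mult_2)
  have out: "Z ! (?b + toeplitz_len (Suc k) - 2 ^ Suc k + a)
      = Z ! (?b + ?n + a mod ?m) + Z ! (?b + (if a < ?m then 2 else 3) * ?n + a mod ?m)"
    unfolding Z_def by (rule nth_toeplitz_prog_Suc) (use Suc.prems(3) in simp)
  have "Z ! (?b + ?n + a mod ?m) + Z ! (?b + (if a < ?m then 2 else 3) * ?n + a mod ?m)
      = (\<Sum>j<2 * ?m. t (int a - int j) * y j)"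
  proof (cases "a < ?m")
    case True
    then show ?thesis
      using toeplitz_sum_split_low[where t = t and m = ?m and a = a and y = y]
      by (simp add: Q1 Q2)
  next
    case False
    then obtain a' where "a = ?m + a'" "a' < ?m"
      using Suc.prems(3) by (metis add_diff_inverse_nat mult_2 nat_add_left_cancel_less power_Suc)
    then show ?thesis
      using toeplitz_sum_split_high[where t = t and m = ?m and a = a' and y = y]
      by (simp add: Q1 Q3)
  qed
  then show ?case
    unfolding Z_def[symmetric] out y_def by simp
qed

lemma toeplitz_matvec_prog:
  fixes e :: "'a \<Rightarrow> nat" and t :: "int \<Rightarrow> real"
  assumes "finite V" "inj_on e V" "\<forall>u\<in>V. e u < 2 ^ k"
  shows "\<exists>P out. computes_matvec P out V (\<lambda>u v. t (int (e u) - int (e v)))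
    \<and> length P = 2 ^ k + toeplitz_len k"
proof -
  let ?N = "2 ^ k :: nat"
  define load :: "'a instr list" where
    "load = map (\<lambda>i. if i \<in> e ` V then Input (inv_into V e i) else Const 0) [0..<?N]"
  define P where "P = load @ toeplitz_prog k t [0..<?N] ?N"
  define out where "out u = toeplitz_len k + e u" for u
  have "wf_prog_from 0 load" "wf_prog_from ?N (toeplitz_prog k t [0..<?N] ?N :: 'a instr list)"
    unfolding load_def by (auto intro: wf_prog_from_map wf_toeplitz_prog)
  then have "wf_prog P"
    by (simp add: P_def load_def wf_prog_iff_wf_prog_from wf_prog_from_append)
  moreover have "\<forall>u\<in>V. out u < length P"
    using assms(3) by (simp add: out_def P_def load_def)
  moreover have "run_prog P x ! out u = (\<Sum>v\<in>V. t (int (e u) - int (e v)) * x v)"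
    if "u \<in> V" for x u
  proof -
    define X where "X i = (if i \<in> e ` V then x (inv_into V e i) else 0)" for i
    define r where "r = exec_from x load []"
    have "length r = ?N"
      by (simp add: r_def load_def)
    have r: "r ! i = X i" if "i < ?N" for i
      using nth_exec_from_map[of ?N "[]" _ i x "[]"] that by (simp add: r_def load_def X_def)
    have "run_prog P x ! out u
        = exec_from x (toeplitz_prog k t [0..<?N] (length r)) r ! (length r + toeplitz_len k - ?N + e u)"
      using \<open>length r = ?N\<close> by (simp add: run_prog_eq_exec_from P_def exec_from_append r_def out_def)
    also have "\<dots> = (\<Sum>j<?N. t (int (e u) - int j) * r ! ([0..<?N] ! j))"
      by (rule nth_toeplitz_prog) (use \<open>length r = ?N\<close> assms(3) that in auto)
    also have "\<dots> = (\<Sum>j<?N. t (int (e u) - int j) * X j)"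
      by (simp add: r)
    also have "\<dots> = (\<Sum>j\<in>e ` V. t (int (e u) - int j) * X j)"
      by (rule sum.mono_neutral_right) (use assms(3) in \<open>auto simp: X_def\<close>)
    also have "\<dots> = (\<Sum>v\<in>V. t (int (e u) - int (e v)) * x v)"
      using assms(2) by (simp add: sum.reindex X_def)
    finally show ?thesis .
  qed
  ultimately have "computes_matvec P out V (\<lambda>u v. t (int (e u) - int (e v)))"
    by (simp add: computes_matvec_def)
  moreover have "length P = 2 ^ k + toeplitz_len k"
    by (simp add: P_def load_def)
  ultimately show ?thesis by blast
qed

lemma three_pow_le_two_pow_powr: "(3::real) ^ k \<le> (2 ^ k) powr (8 / 5)"
proof -
  have "((3::real) ^ k) ^ 5 = (3 ^ 5) ^ k" "((2::real) ^ k) ^ 8 = (2 ^ 8) ^ k"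
    by (simp_all only: power_mult[symmetric] mult.commute)
  moreover have "(((2::real) ^ k) powr (8 / 5)) ^ 5 = ((2::real) ^ k) ^ 8"
    by (simp add: powr_power powr_realpow)
  ultimately have "((3::real) ^ k) ^ 5 \<le> ((2 ^ k) powr (8 / 5)) ^ 5"
    by (simp add: power_mono)
  then show ?thesis
    using power_mono_iff[of "(3::real) ^ k" "(2 ^ k) powr (8 / 5)" 5] by simp
qed

lemma toeplitz_matvec_prog_size_bound:
  fixes e :: "'a \<Rightarrow> nat" and t :: "int \<Rightarrow> real"
  assumes "finite V" "inj_on e V" "\<forall>u\<in>V. e u < N" "N \<ge> 1"
  shows "\<exists>P out. computes_matvec P out V (\<lambda>u v. t (int (e u) - int (e v)))
    \<and> real (length P) \<le> 2 * real N + 5 * (2 * real N) powr (8 / 5)"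
proof -
  obtain k where k: "2 ^ k \<le> N" "N < 2 ^ Suc k"
    using ex_power_ivl1[of 2 N] assms(4) by auto
  then have "\<forall>u\<in>V. e u < 2 ^ Suc k"
    using assms(3) by (meson order_less_trans)
  then obtain P out where P: "computes_matvec P out V (\<lambda>u v. t (int (e u) - int (e v)))"
    and len: "length P = 2 ^ Suc k + toeplitz_len (Suc k)"
    using toeplitz_matvec_prog assms(1,2) by blast
  have "real (2 ^ k) \<le> real N"
    using k(1) by (simp only: of_nat_le_iff)
  then have N: "(2::real) ^ Suc k \<le> 2 * real N"
    by simp
  have "real (length P) \<le> real (2 ^ Suc k + 5 * 3 ^ Suc k)"
    unfolding of_nat_le_iff using len toeplitz_len_le[of "Suc k"] by linarith
  also have "\<dots> = 2 ^ Suc k + 5 * 3 ^ Suc k"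
    by simp
  also have "\<dots> \<le> 2 ^ Suc k + 5 * (2 ^ Suc k) powr (8 / 5)"
    using three_pow_le_two_pow_powr[of "Suc k"] by simp
  also have "\<dots> \<le> 2 * real N + 5 * (2 * real N) powr (8 / 5)"
    using N by (intro add_mono mult_left_mono powr_mono2) simp_all
  finally show ?thesis
    using P by blast
qed

section \<open>Distances in the grid\<close>

definition manhattan_dist :: "nat list \<Rightarrow> nat list \<Rightarrow> nat" where
  "manhattan_dist u v = (\<Sum>i<length u. nat \<bar>int (u ! i) - int (v ! i)\<bar>)"

lemma sum_lessThan_agree_except:
  fixes f g :: "nat \<Rightarrow> 'b :: comm_monoid_add"
  assumes "k < n" "\<forall>i<n. i \<noteq> k \<longrightarrow> f i = g i"
  shows "(\<Sum>i<n. f i) + g k = (\<Sum>i<n. g i) + f k"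
proof -
  have "(\<Sum>i\<in>{..<n} - {k}. f i) = (\<Sum>i\<in>{..<n} - {k}. g i)"
    using assms(2) by (intro sum.cong) auto
  then show ?thesis
    using assms(1) by (simp add: sum.remove[of "{..<n}" k] ac_simps)
qed

lemma grid_vertices_length: "u \<in> grid_vertices ns \<Longrightarrow> length u = length ns"
  by (simp add: grid_vertices_def)

lemma manhattan_dist_eq_0_iff:
  "length u = length v \<Longrightarrow> manhattan_dist u v = 0 \<longleftrightarrow> u = v"
  by (auto simp: manhattan_dist_def nth_equalityI)

lemma manhattan_dist_le_if_grid_adj:
  assumes "grid_adj ns u w"
  shows "manhattan_dist u v \<le> manhattan_dist w v + 1"
proof -
  obtain k where k: "k < length ns" "u ! k = w ! k + 1 \<or> w ! k = u ! k + 1"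
    and same: "\<forall>i<length ns. i \<noteq> k \<longrightarrow> u ! i = w ! i"
    using assms by (auto simp: grid_adj_def)
  have "length u = length ns" "length w = length ns"
    using assms by (auto simp: grid_adj_def grid_vertices_length)
  then show ?thesis
    using sum_lessThan_agree_except[OF k(1), of "\<lambda>i. nat \<bar>int (u ! i) - int (v ! i)\<bar>"
        "\<lambda>i. nat \<bar>int (w ! i) - int (v ! i)\<bar>"] same k(2)
    by (auto simp: manhattan_dist_def)
qed

lemma manhattan_dist_le_walk:
  "walk_of_len (grid_adj ns) k u v \<Longrightarrow> manhattan_dist u v \<le> k"
proof (induction k arbitrary: u)
  case 0
  then show ?case by (simp add: manhattan_dist_def)
next
  case (Suc k)
  then obtain w where "grid_adj ns u w" "walk_of_len (grid_adj ns) k w v"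
    by auto
  then show ?case
    using Suc.IH manhattan_dist_le_if_grid_adj[of ns u w v] by fastforce
qed

lemma grid_step_towards:
  assumes "u \<in> grid_vertices ns" "v \<in> grid_vertices ns" "u \<noteq> v"
  obtains w where "grid_adj ns u w" "manhattan_dist u v = manhattan_dist w v + 1"
proof -
  have len: "length u = length ns" "length v = length ns"
    using assms by (simp_all add: grid_vertices_length)
  then obtain k where k: "k < length ns" "u ! k \<noteq> v ! k"
    using assms(3) nth_equalityI by metis
  define w where "w = u[k := (if u ! k < v ! k then u ! k + 1 else u ! k - 1)]"
  have "w \<in> grid_vertices ns"
    using assms k len by (auto simp: grid_vertices_def w_def nth_list_update)
  then have "grid_adj ns u w"
    using assms(1) k len by (auto simp: grid_adj_def w_def nth_list_update intro!: exI[of _ k])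
  moreover have "manhattan_dist u v = manhattan_dist w v + 1"
  proof -
    have "\<forall>i<length ns. i \<noteq> k \<longrightarrow> u ! i = w ! i"
      by (simp add: w_def)
    moreover have "nat \<bar>int (u ! k) - int (v ! k)\<bar> = nat \<bar>int (w ! k) - int (v ! k)\<bar> + 1"
      using k len by (auto simp: w_def)
    ultimately show ?thesis
      using sum_lessThan_agree_except[OF k(1), of "\<lambda>i. nat \<bar>int (u ! i) - int (v ! i)\<bar>"
          "\<lambda>i. nat \<bar>int (w ! i) - int (v ! i)\<bar>"] len
      by (simp add: manhattan_dist_def w_def)
  qed
  ultimately show thesis ..
qed

lemma walk_of_len_manhattan_dist:
  assumes "u \<in> grid_vertices ns" "v \<in> grid_vertices ns"
  shows "walk_of_len (grid_adj ns) (manhattan_dist u v) u v"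
  using assms(1)
proof (induction "manhattan_dist u v" arbitrary: u)
  case 0
  then show ?case
    using assms(2) by (metis manhattan_dist_eq_0_iff grid_vertices_length walk_of_len.simps(1))
next
  case (Suc d)
  then have "u \<noteq> v"
    by (metis manhattan_dist_eq_0_iff nat.distinct(1))
  then obtain w where "grid_adj ns u w" "manhattan_dist u v = manhattan_dist w v + 1"
    using grid_step_towards Suc.prems assms(2) by metis
  moreover have "w \<in> grid_vertices ns"
    using \<open>grid_adj ns u w\<close> by (simp add: grid_adj_def)
  ultimately show ?case
    using Suc.hyps by auto
qed

lemma graph_dist_grid_adj:
  assumes "u \<in> grid_vertices ns" "v \<in> grid_vertices ns"
  shows "graph_dist (grid_adj ns) u v = manhattan_dist u v"
  unfolding graph_dist_def
  by (rule Least_equality) (use walk_of_len_manhattan_dist[OF assms] manhattan_dist_le_walk in auto)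

section \<open>A difference-preserving code for grid vertices\<close>

fun grid_code :: "nat list \<Rightarrow> nat list \<Rightarrow> nat" where
  "grid_code (n # ns) (a # u) = a + 2 * n * grid_code ns u"
| "grid_code _ _ = 0"

lemma Cons_in_grid_vertices_iff:
  "a # u \<in> grid_vertices (n # ns) \<longleftrightarrow> a < n \<and> u \<in> grid_vertices ns"
  unfolding grid_vertices_def by (auto simp: less_Suc_eq_0_disj)

lemma in_grid_vertices_ConsE:
  assumes "v \<in> grid_vertices (n # ns)"
  obtains a u where "v = a # u" "a < n" "u \<in> grid_vertices ns"
  using assms Cons_in_grid_vertices_iff by (cases v) (auto simp: grid_vertices_def)

lemma grid_vertices_Nil: "grid_vertices [] = {[]}"
  by (auto simp: grid_vertices_def)

lemma grid_vertices_Cons: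
  "grid_vertices (n # ns) = (\<lambda>(a, u). a # u) ` ({..<n} \<times> grid_vertices ns)"
  by (auto simp: Cons_in_grid_vertices_iff elim: in_grid_vertices_ConsE)

lemma finite_grid_vertices: "finite (grid_vertices ns)"
  by (induction ns) (simp_all add: grid_vertices_Nil grid_vertices_Cons)

lemma card_grid_vertices: "card (grid_vertices ns) = prod_list ns"
proof (induction ns)
  case Nil
  then show ?case by (simp add: grid_vertices_Nil)
next
  case (Cons n ns)
  have "inj_on (\<lambda>(a, u). a # u) ({..<n} \<times> grid_vertices ns)"
    by (auto simp: inj_on_def)
  then show ?case
    using Cons by (simp add: grid_vertices_Cons card_image card_cartesian_product)
qed

lemma grid_code_less: "u \<in> grid_vertices ns \<Longrightarrow> grid_code ns u < 2 ^ length ns * prod_list ns"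
proof (induction ns arbitrary: u)
  case Nil
  then show ?case by (simp add: grid_vertices_Nil)
next
  case (Cons n ns)
  then obtain a u' where u: "u = a # u'" "a < n" "u' \<in> grid_vertices ns"
    by (auto elim: in_grid_vertices_ConsE)
  have "grid_code (n # ns) u < 2 * n * (grid_code ns u' + 1)"
    using u by simp
  also have "\<dots> \<le> 2 * n * (2 ^ length ns * prod_list ns)"
    using Cons.IH[OF u(3)] by (intro mult_le_mono2) simp
  finally show ?case by (simp add: ac_simps)
qed

lemma add_mult_eq_0_imp_eq_0:
  fixes d c b :: int
  assumes "\<bar>d\<bar> < b" "d + b * c = 0"
  shows "c = 0"
proof (rule ccontr)
  assume "c \<noteq> 0"
  then have "1 \<le> \<bar>c\<bar>"
    by linarith
  moreover have "0 < b"
    using assms(1) by linarith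
  ultimately have "b \<le> \<bar>b * c\<bar>"
    using mult_left_mono[of 1 "\<bar>c\<bar>" b] by (simp add: abs_mult)
  then show False
    using assms by linarith
qed

lemma grid_code_diff_eqD:
  assumes "u \<in> grid_vertices ns" "v \<in> grid_vertices ns" "u' \<in> grid_vertices ns" "v' \<in> grid_vertices ns"
    and "int (grid_code ns u) - int (grid_code ns v) = int (grid_code ns u') - int (grid_code ns v')"
    and "i < length ns"
  shows "int (u ! i) - int (v ! i) = int (u' ! i) - int (v' ! i)"
  using assms
proof (induction ns arbitrary: u v u' v' i)
  case Nil
  then show ?case by simp
next
  case (Cons n ns)
  obtain a x b y a' x' b' y' where
    uv: "u = a # x" "v = b # y" "u' = a' # x'" "v' = b' # y'"
    and digits: "a < n" "b < n" "a' < n" "b' < n"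
    and tails: "x \<in> grid_vertices ns" "y \<in> grid_vertices ns"
      "x' \<in> grid_vertices ns" "y' \<in> grid_vertices ns"
    using Cons.prems(1-4) by (elim in_grid_vertices_ConsE) blast
  define D where "D = (int a - int b) - (int a' - int b')"
  define E where
    "E = (int (grid_code ns x) - int (grid_code ns y)) - (int (grid_code ns x') - int (grid_code ns y'))"
  have "D + 2 * int n * E = 0"
    using Cons.prems(5) by (simp add: uv D_def E_def algebra_simps)
  moreover have "\<bar>D\<bar> < 2 * int n"
    using digits by (simp add: D_def)
  ultimately have "E = 0"
    using add_mult_eq_0_imp_eq_0 by blast
  with \<open>D + 2 * int n * E = 0\<close> have "D = 0"
    by simp
  have "int (grid_code ns x) - int (grid_code ns y) = int (grid_code ns x') - int (grid_code ns y')"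
    using \<open>E = 0\<close> by (simp add: E_def)
  then show ?case
    using Cons.IH[OF tails] Cons.prems(6) \<open>D = 0\<close> by (cases i) (simp_all add: uv D_def)
qed

lemma inj_on_grid_code: "inj_on (grid_code ns) (grid_vertices ns)"
proof (rule inj_onI)
  fix u u' assume u: "u \<in> grid_vertices ns" and u': "u' \<in> grid_vertices ns"
    and "grid_code ns u = grid_code ns u'"
  then have "u ! i = u' ! i" if "i < length ns" for i
    using grid_code_diff_eqD[OF u u u' u _ that] by simp
  moreover have "length u = length ns" "length u' = length ns"
    using u u' by (simp_all add: grid_vertices_length)
  ultimately show "u = u'"
    by (simp add: nth_equalityI)
qed

lemma manhattan_dist_eq_if_grid_code_diff_eq:
  assumes "u \<in> grid_vertices ns" "v \<in> grid_vertices ns" "u' \<in> grid_vertices ns" "v' \<in> grid_vertices ns"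
    and "int (grid_code ns u) - int (grid_code ns v) = int (grid_code ns u') - int (grid_code ns v')"
  shows "manhattan_dist u v = manhattan_dist u' v'"
proof -
  have "(\<Sum>i<length ns. nat \<bar>int (u ! i) - int (v ! i)\<bar>)
      = (\<Sum>i<length ns. nat \<bar>int (u' ! i) - int (v' ! i)\<bar>)"
    using grid_code_diff_eqD[OF assms] by (intro sum.cong) auto
  then show ?thesis
    using assms(1,3) by (simp add: manhattan_dist_def grid_vertices_length)
qed

lemma ex_fun_of_code_diff:
  fixes e :: "'a \<Rightarrow> nat"
  assumes "\<And>u v u' v'. u \<in> V \<Longrightarrow> v \<in> V \<Longrightarrow> u' \<in> V \<Longrightarrow> v' \<in> V \<Longrightarrow>
    int (e u) - int (e v) = int (e u') - int (e v') \<Longrightarrow> M u v = M u' v'"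
  shows "\<exists>T. \<forall>u\<in>V. \<forall>v\<in>V. M u v = T (int (e u) - int (e v))"
proof -
  define has_diff where "has_diff c p \<longleftrightarrow> p \<in> V \<times> V \<and> int (e (fst p)) - int (e (snd p)) = c" for c p
  have "M u v = M (fst (SOME p. has_diff c p)) (snd (SOME p. has_diff c p))"
    if "u \<in> V" "v \<in> V" "c = int (e u) - int (e v)" for u v c
  proof -
    have "has_diff c (u, v)"
      using that by (simp add: has_diff_def)
    then have "has_diff c (SOME p. has_diff c p)"
      by (rule someI)
    then show ?thesis
      using that by (intro assms) (auto simp: has_diff_def)
  qed
  then show ?thesis
    by (intro exI[of _ "\<lambda>c. M (fst (SOME p. has_diff c p)) (snd (SOME p. has_diff c p))"]) simp
qed

lemma computes_matvec_cong:
  assumes "\<And>u v. u \<in> V \<Longrightarrow> v \<in> V \<Longrightarrow> M u v = M' u v"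
  shows "computes_matvec P out V M \<longleftrightarrow> computes_matvec P out V M'"
  unfolding computes_matvec_def using assms by (simp cong: sum.cong)

lemma grid_dist_matvec_prog:
  fixes f :: "nat \<Rightarrow> real"
  assumes "\<forall>i<length ns. ns ! i \<ge> 1"
  defines "L \<equiv> card (grid_vertices ns)" and "c \<equiv> 2 ^ (length ns + 1) :: real"
  shows "\<exists>P out. computes_matvec P out (grid_vertices ns) (\<lambda>u v. f (graph_dist (grid_adj ns) u v))
    \<and> real (length P) \<le> c * real L + 5 * (c * real L) powr (8 / 5)"
proof -
  let ?V = "grid_vertices ns" and ?e = "grid_code ns"
  let ?M = "\<lambda>u v. f (graph_dist (grid_adj ns) u v)"
  have "?M u v = ?M u' v'"
    if "u \<in> ?V" "v \<in> ?V" "u' \<in> ?V" "v' \<in> ?V"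
      "int (?e u) - int (?e v) = int (?e u') - int (?e v')" for u v u' v'
  proof -
    have "manhattan_dist u v = manhattan_dist u' v'"
      using that by (rule manhattan_dist_eq_if_grid_code_diff_eq)
    then show ?thesis
      using that(1-4) by (simp add: graph_dist_grid_adj)
  qed
  then obtain T where T: "\<forall>u\<in>?V. \<forall>v\<in>?V. ?M u v = T (int (?e u) - int (?e v))"
    using ex_fun_of_code_diff[of ?V ?e ?M] by blast
  have "0 \<notin> set ns"
    using assms(1) by (auto simp: in_set_conv_nth)
  then have "prod_list ns \<noteq> 0"
    by (simp add: prod_list_zero_iff)
  then have "1 \<le> 2 ^ length ns * L"
    by (simp add: L_def card_grid_vertices)
  moreover have "\<forall>u\<in>?V. ?e u < 2 ^ length ns * L"
    using grid_code_less by (simp add: L_def card_grid_vertices)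
  ultimately obtain P out where P: "computes_matvec P out ?V (\<lambda>u v. T (int (?e u) - int (?e v)))"
    and len: "real (length P)
      \<le> 2 * real (2 ^ length ns * L) + 5 * (2 * real (2 ^ length ns * L)) powr (8 / 5)"
    using toeplitz_matvec_prog_size_bound[OF finite_grid_vertices inj_on_grid_code] by blast
  have "computes_matvec P out ?V ?M \<longleftrightarrow> computes_matvec P out ?V (\<lambda>u v. T (int (?e u) - int (?e v)))"
    by (rule computes_matvec_cong) (use T in simp)
  moreover have "2 * real (2 ^ length ns * L) = c * real L"
    by (simp add: c_def)
  ultimately show ?thesis
    using P len by metis
qed

lemma linear_plus_powr_in_o_square:
  "(c::real) > 0 \<Longrightarrow> (\<lambda>L::nat. c * real L + 5 * (c * real L) powr (8 / 5)) \<in> o(\<lambda>L. real L ^ 2)"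
  by real_asymp

theorem corollary3p4:
  fixes d :: nat and f :: "nat \<Rightarrow> real"
  assumes "d \<ge> 1"
  shows "\<exists>g :: nat \<Rightarrow> real. g \<in> o(\<lambda>L. real L ^ 2) \<and>
           (\<forall>ns. length ns = d \<longrightarrow> (\<forall>i<d. ns ! i \<ge> 1) \<longrightarrow>
              (\<exists>P out. computes_matvec P out (grid_vertices ns)
                         (\<lambda>u v. f (graph_dist (grid_adj ns) u v))
                     \<and> real (length P) \<le> g (card (grid_vertices ns))))"
proof -
  \<comment> \<open>The construction also works for d = 0.\<close>
  define g where "g L = 2 ^ (d + 1) * real L + 5 * (2 ^ (d + 1) * real L) powr (8 / 5)" for L :: nat
  have "g \<in> o(\<lambda>L. real L ^ 2)"
    unfolding g_def by (rule linear_plus_powr_in_o_square) simp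
  moreover have "\<exists>P out. computes_matvec P out (grid_vertices ns) (\<lambda>u v. f (graph_dist (grid_adj ns) u v))
      \<and> real (length P) \<le> g (card (grid_vertices ns))"
    if "length ns = d" "\<forall>i<d. ns ! i \<ge> 1" for ns
  proof -
    have "\<forall>i<length ns. ns ! i \<ge> 1"
      using that by simp
    from grid_dist_matvec_prog[OF this, of f] show ?thesis
      by (simp only: g_def that(1))
  qed
  ultimately show ?thesis
    by (intro exI[of _ g] conjI allI impI)
qed

end
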